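(* For every prime power $q$ of characteristic $p\ge3$, the number $I_{\mathrm{L}}(q)$ of $\mathbb{F}_q$-isomorphism classes of Legendre curves $E_{\mathrm{L},u}$, $u\in\mathbb{F}_q\setminus\{0,1\}$, is $$I_{\mathrm{L}}(q)=\begin{cases}\lfloor (7q+29)/24\rfloor,& q\equiv1\pmod{12},\\ \lfloor (q+2)/3\rfloor,& q\equiv3,7\pmod{12},\\ \lfloor (7q+13)/24\rfloor,& q\equiv5,9\pmod{12},\\ (q-2)/3,& q\equiv11\pmod{12}.\end{cases}$$
   Context: For $u\in\mathbb{F}_q\setminus\{0,1\}$, $E_{\mathrm{L},u}$ is the elliptic curve $Y^2=X(X-1)(X-u)$ over $\mathbb{F}_q$. Two elliptic curves in Weierstrass form are $\mathbb{F}_q$-isomorphic if one is transformed into the other by $X\mapsto\alpha^2\tilde X+\beta$, $Y\mapsto\alpha^3\tilde Y+\alpha^2\gamma\tilde X+\delta$ with $\alpha,\beta,\gamma,\delta\in\mathbb{F}_q$, $\alpha\ne0$. $I_{\mathrm{L}}(q)$ is the number of equivalence classes of the set $\{E_{\mathrm{L},u}: u\in\mathbb{F}_q\setminus\{0,1\}\}$ under $\mathbb{F}_q$-isomorphism. *)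

theory Defs
  imports Main
begin

text \<open>Weierstrass coefficients (a1,a2,a3,a4,a6) of Y^2 + a1 XY + a3 Y = X^3 + a2 X^2 + a4 X + a6.\<close>
type_synonym 'a weier = "'a \<times> 'a \<times> 'a \<times> 'a \<times> 'a"

text \<open>Legendre curve Y^2 = X(X-1)(X-u) = X^3 - (1+u) X^2 + u X.\<close>
definition legendre_curve :: "'a::field \<Rightarrow> 'a weier" where
  "legendre_curve u = (0, -(1 + u), 0, u, 0)"

text \<open>Coefficients of the curve obtained by substituting X = al^2 X' + be,
  Y = al^3 Y' + al^2 ga X' + de into the equation of E and dividing by al^6
  (standard formulas, Silverman III.1).\<close>
definition weier_transform :: "'a::field \<Rightarrow> 'a \<Rightarrow> 'a \<Rightarrow> 'a \<Rightarrow> 'a weier \<Rightarrow> 'a weier" where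
  "weier_transform al be ga de E = (case E of (a1, a2, a3, a4, a6) \<Rightarrow>
     ((a1 + 2*ga) / al,
      (a2 - ga*a1 + 3*be - ga^2) / al^2,
      (a3 + be*a1 + 2*de) / al^3,
      (a4 - ga*a3 + 2*be*a2 - (de + be*ga)*a1 + 3*be^2 - 2*ga*de) / al^4,
      (a6 + be*a4 + be^2*a2 + be^3 - de*a3 - de^2 - be*de*a1) / al^6))"

definition weier_iso :: "'a::field weier \<Rightarrow> 'a weier \<Rightarrow> bool" where
  "weier_iso E E' \<longleftrightarrow> (\<exists>al be ga de. al \<noteq> 0 \<and> weier_transform al be ga de E = E')"

definition legendre_iso_rel :: "('a::field \<times> 'a) set" where
  "legendre_iso_rel = {(u, v). u \<notin> {0, 1} \<and> v \<notin> {0, 1} \<and>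
                         weier_iso (legendre_curve u) (legendre_curve v)}"

definition I_L :: "'a::{finite, field} itself \<Rightarrow> nat" where
  "I_L _ = card ((UNIV - {0, 1 :: 'a}) // legendre_iso_rel)"

end

theory Submission
  imports Defs Complex_Main
begin

(* 1. In odd characteristic E_u and E_v are isomorphic iff an affine map x -> m x + b with
      m a nonzero square carries {0, 1, v} onto {0, 1, u} (the 2-torsion abscissae).  This is
      obtained by comparing the coefficients of X(X-1)(X-u) with those of the transformed curve.
   2. Such maps are the six "moves" u -> u, 1-u, 1/u, (u-1)/u, 1/(1-u), u/(u-1) with slopes
      1, -1, u, -u, u-1, 1-u; the class of u consists of the moves with square slope.
   3. Counting classes as the sum over u of 1/|class(u)|, generic u contribute the reciprocal of
      the number of square slopes.  Summing these uses the number of squares and the number of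
      u with u and u-1 both squares, obtained from the points of the conic y^2 - z^2 = 1.
   4. The non-generic parameters are the harmonic ones -1, 2, 1/2 and the roots of u^2 - u + 1;
      their defects are computed explicitly (characteristic 3 separately, where they coincide).
   5. This yields 3 I_L = q + {-2, 0, 2} for q = 3 mod 4 and 24 I_L = 7q + c, c in
      {1, 9, 13, 17, 29}, for q = 1 mod 4; integrality then fixes q mod 3 and the floor formula. *)

section \<open>Squares in finite fields of odd characteristic\<close>

definition is_square :: "'a::field \<Rightarrow> bool" where
  "is_square x \<longleftrightarrow> (\<exists>t. x = t^2)"

lemma is_square_power2 [simp]: "is_square (t^2)"
  by (auto simp: is_square_def)

lemma is_square_one [simp]: "is_square 1"
  using is_square_power2[of 1] by simp

lemma is_square_mult: "is_square a \<Longrightarrow> is_square b \<Longrightarrow> is_square (a * b)"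
  by (auto simp: is_square_def power_mult_distrib[symmetric])

lemma is_square_inverse_iff: "is_square (1 / a) \<longleftrightarrow> is_square a"
proof -
  have inv: "is_square (1 / x)" if "is_square x" for x :: 'a
    using that unfolding is_square_def by (metis power_one_over)
  show ?thesis
    using inv[of a] inv[of "1 / a"] by auto
qed

lemma is_square_cancel:
  assumes "is_square (a * b)" "is_square a" "a \<noteq> 0"
  shows "is_square b"
proof -
  have "is_square ((a * b) * (1 / a))"
    using assms is_square_mult is_square_inverse_iff by blast
  then show ?thesis using \<open>a \<noteq> 0\<close> by simp
qed

lemma is_square_neg_iff:
  assumes "is_square (-1 :: 'a::field)"
  shows "is_square (-x) \<longleftrightarrow> is_square (x :: 'a)"
  using is_square_mult[OF assms, of x] is_square_mult[OF assms, of "-x"] by auto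

lemma not_square_neg:
  fixes x :: "'a::field"
  assumes "\<not> is_square (-1 :: 'a)" "x \<noteq> 0" "is_square x"
  shows "\<not> is_square (-x)"
  using is_square_cancel[of x "-1"] assms by auto

lemma neg_neq_self:
  fixes x :: "'a::field"
  assumes "(2::'a) \<noteq> 0" "x \<noteq> 0"
  shows "-x \<noteq> x"
proof
  assume "-x = x"
  then have "2 * x = 0" by (metis add_eq_0_iff mult_2)
  then show False using assms by simp
qed

lemma card_square_roots:
  fixes a :: "'a::field"
  assumes two: "(2::'a) \<noteq> 0" and "a \<noteq> 0"
  shows "card {x. x^2 = a} = (if is_square a then 2 else 0)"
proof (cases "is_square a")
  case True
  then obtain y where y: "a = y^2" by (auto simp: is_square_def)
  then have "y \<noteq> 0" using \<open>a \<noteq> 0\<close> by auto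
  have "{x. x^2 = a} = {y, -y}" using y by (auto simp: power2_eq_iff)
  then show ?thesis using True neg_neq_self[OF two \<open>y \<noteq> 0\<close>] by simp
next
  case False
  then have "{x. x^2 = a} = {}" by (auto simp: is_square_def)
  then show ?thesis using False by simp
qed

lemma card_fibers:
  assumes "finite A" and "\<And>y. y \<in> f ` A \<Longrightarrow> card {x\<in>A. f x = y} = k"
  shows "card A = k * card (f ` A)"
proof -
  have "card A = card (\<Union>y\<in>f ` A. {x\<in>A. f x = y})"
    by (rule arg_cong[where f = card]) auto
  also have "\<dots> = (\<Sum>y\<in>f ` A. card {x\<in>A. f x = y})"
    by (rule card_UN_disjoint) (use assms(1) in auto)
  also have "\<dots> = k * card (f ` A)" using assms(2) by simp
  finally show ?thesis .
qed

definition nonzero_squares :: "'a::field set" where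
  "nonzero_squares = {x. x \<noteq> 0 \<and> is_square x}"

text \<open>In a finite field of odd order q there are (q - 1)/2 nonzero squares, since squaring is
  two-to-one on the nonzero elements.\<close>
lemma card_nonzero_squares:
  assumes two: "(2::'a::{finite,field}) \<noteq> 0"
  shows "card (UNIV::'a set) = 2 * card (nonzero_squares::'a set) + 1"
proof -
  let ?U = "UNIV - {0::'a}"
  have image: "(\<lambda>x. x^2) ` ?U = nonzero_squares"
    by (auto simp: nonzero_squares_def is_square_def)
  have "card ?U = 2 * card ((\<lambda>x. x^2) ` ?U)"
  proof (rule card_fibers)
    fix y assume "y \<in> (\<lambda>x::'a. x^2) ` ?U"
    then obtain a where a: "a \<noteq> 0" "y = a^2" by auto
    then have "{x \<in> ?U. x^2 = y} = {x. x^2 = y}" by auto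
    then show "card {x \<in> ?U. x^2 = y} = 2" using card_square_roots[OF two, of y] a by simp
  qed simp
  then show ?thesis
    using image card_Diff_singleton[of 0 "UNIV::'a set"] finite_UNIV_card_ge_0[where 'a='a] by simp
qed

text \<open>If -1 is not a square, the nonzero squares have index 2 in the multiplicative group,
  so every nonzero element is a square up to sign.\<close>
lemma square_or_neg_square:
  fixes x :: "'a::{finite,field}"
  assumes two: "(2::'a) \<noteq> 0" and not_sq: "\<not> is_square (-1::'a)" and "x \<noteq> 0"
  shows "is_square x \<or> is_square (-x)"
proof (rule ccontr)
  assume neither: "\<not> (is_square x \<or> is_square (-x))"
  let ?N = "(UNIV - {0}) - (nonzero_squares::'a set)"
  have "card ?N = card (UNIV - {0::'a}) - card (nonzero_squares::'a set)"
    by (rule card_Diff_subset) (auto simp: nonzero_squares_def)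
  then have card_N: "card ?N = card (nonzero_squares::'a set)"
    using card_nonzero_squares[OF two] card_Diff_singleton[of 0 "UNIV::'a set"] by simp
  have "uminus ` nonzero_squares \<subseteq> ?N"
    using not_square_neg[OF not_sq] by (auto simp: nonzero_squares_def)
  moreover have "card (uminus ` (nonzero_squares::'a set)) = card ?N"
    using card_N by (simp add: card_image)
  ultimately have "uminus ` nonzero_squares = ?N"
    by (intro card_subset_eq) auto
  moreover have "x \<in> ?N" using neither \<open>x \<noteq> 0\<close> by (auto simp: nonzero_squares_def)
  ultimately obtain s where "s \<in> nonzero_squares" "x = -s" by blast
  then show False using neither by (auto simp: nonzero_squares_def)
qed

text \<open>The conic y^2 - z^2 = 1 is parametrised by t = y + z, so it has q - 1 points.\<close>
lemma card_unit_hyperbola: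
  assumes two: "(2::'a::{finite,field}) \<noteq> 0"
  shows "card {(y, z). y^2 - z^2 = (1::'a)} = card (UNIV::'a set) - 1"
proof -
  define g where "g = (\<lambda>t::'a. ((t + 1/t) / 2, (t - 1/t) / 2))"
  have four: "(4::'a) \<noteq> 0"
    using two mult_eq_0_iff[of "2::'a" 2] by simp
  have "g ` (UNIV - {0}) = {(y, z). y^2 - z^2 = 1}"
  proof (intro equalityI subsetI)
    fix p assume "p \<in> g ` (UNIV - {0})"
    then obtain t where t: "t \<noteq> 0" "p = g t" by auto
    have "(t + 1/t)^2 - (t - 1/t)^2 = 4"
      using t by (simp add: field_simps power2_eq_square)
    then have "((t + 1/t) / 2)^2 - ((t - 1/t) / 2)^2 = 1"
      using four by (simp add: power_divide diff_divide_distrib[symmetric])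
    then show "p \<in> {(y, z). y^2 - z^2 = 1}" using t by (simp add: g_def)
  next
    fix p assume "p \<in> {(y, z). y^2 - z^2 = (1::'a)}"
    then obtain y z where p: "p = (y, z)" and e: "(y + z) * (y - z) = 1"
      by (auto simp: power2_eq_square algebra_simps)
    then have "y + z \<noteq> 0" by auto
    moreover have "1 / (y + z) = y - z" using e \<open>y + z \<noteq> 0\<close> by (simp add: field_simps)
    then have "g (y + z) = p" using two by (simp add: g_def p field_simps)
    ultimately show "p \<in> g ` (UNIV - {0})" by force
  qed
  moreover have "inj_on g (UNIV - {0})"
  proof (rule inj_onI)
    fix s t assume "g s = g t"
    then have "fst (g s) + snd (g s) = fst (g t) + snd (g t)" by simp
    then show "s = t" using two by (simp add: g_def field_simps)
  qed
  ultimately show ?thesis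
    using card_image card_Diff_singleton[of 0 "UNIV::'a set"] by fastforce
qed

text \<open>Counting points of the same conic with both coordinates nonzero gives the number of u
  such that both u and u - 1 are nonzero squares; as a by-product q = 1 or 3 mod 4 according
  to whether -1 is a square.\<close>
lemma card_consecutive_squares:
  assumes two: "(2::'a::{finite,field}) \<noteq> 0"
  shows "4 * card {u::'a. u \<noteq> 0 \<and> u \<noteq> 1 \<and> is_square u \<and> is_square (u - 1)} + 3
           + (if is_square (-1::'a) then 2 else 0) = card (UNIV::'a set)"
proof -
  define Q where "Q = {u::'a. u \<noteq> 0 \<and> u \<noteq> 1 \<and> is_square u \<and> is_square (u - 1)}"
  define hyp where "hyp = {(y, z). y^2 - z^2 = (1::'a)}"
  define H where "H = {(y, z) \<in> hyp. y \<noteq> 0 \<and> z \<noteq> 0}"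
  have split: "hyp = H \<union> ({(1, 0), (-1, 0)} \<union> {0} \<times> {z. z^2 = -1})"
    by (auto simp: hyp_def H_def power2_eq_1_iff minus_equation_iff)
  have card_axis: "card {(1::'a, 0::'a), (-1, 0)} = 2"
  proof -
    have "(-1::'a) \<noteq> 1" by (rule neg_neq_self[OF two]) simp
    then have "(1::'a, 0::'a) \<noteq> (-1, 0)" by simp
    then show ?thesis by (metis card_2_iff)
  qed
  have card_imag: "card ({0} \<times> {z::'a. z^2 = -1}) = (if is_square (-1::'a) then 2 else 0)"
    using card_square_roots[OF two, of "-1"] by (simp add: card_cartesian_product_singleton)
  have image: "(\<lambda>p. (fst p)^2) ` H = Q"
  proof (intro equalityI subsetI)
    fix u assume "u \<in> (\<lambda>p. (fst p)^2) ` H"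
    then obtain y z where "y^2 - z^2 = 1" "y \<noteq> 0" "z \<noteq> 0" "u = y^2"
      by (auto simp: H_def hyp_def)
    moreover then have "u - 1 = z^2" by (simp add: algebra_simps)
    ultimately show "u \<in> Q" by (auto simp: Q_def)
  next
    fix u assume "u \<in> Q"
    then obtain y z where "u = y^2" "u - 1 = z^2" "u \<noteq> 0" "u \<noteq> 1"
      by (auto simp: Q_def is_square_def)
    then have "(y, z) \<in> H" "u = (fst (y, z))^2" by (auto simp: H_def hyp_def algebra_simps)
    then show "u \<in> (\<lambda>p. (fst p)^2) ` H" by blast
  qed
  have card_H: "card H = 4 * card Q"
    unfolding image[symmetric]
  proof (rule card_fibers)
    fix u assume "u \<in> (\<lambda>p. (fst p)^2) ` H"
    then have u: "u \<in> Q" using image by simp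
    have "{p \<in> H. (fst p)^2 = u} = {y. y^2 = u} \<times> {z. z^2 = u - 1}"
      using u by (auto simp: H_def hyp_def Q_def algebra_simps)
    then show "card {p \<in> H. (fst p)^2 = u} = 4"
      using u card_square_roots[OF two, of u] card_square_roots[OF two, of "u - 1"]
      by (simp add: Q_def card_cartesian_product)
  qed simp
  have "card hyp = card H + (card {(1::'a, 0::'a), (-1, 0)} + card ({0} \<times> {z::'a. z^2 = -1}))"
    unfolding split by (subst card_Un_disjoint; (subst card_Un_disjoint)?) (auto simp: H_def)
  then show ?thesis
    using card_axis card_imag card_unit_hyperbola[OF two] card_H finite_UNIV_card_ge_0[where 'a='a]
    unfolding hyp_def Q_def by simp
qed

lemma card_mod_four:
  assumes two: "(2::'a::{finite,field}) \<noteq> 0"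
  shows "card (UNIV::'a set) mod 4 = (if is_square (-1::'a) then 1 else 3)"
  using card_consecutive_squares[OF two] by (cases "is_square (-1::'a)") (auto, presburger+)

section \<open>Isomorphisms of Legendre curves as affine maps of the 2-torsion\<close>

lemma weier_transform_legendre:
  fixes al be ga de u :: "'a::field"
  shows "weier_transform al be ga de (legendre_curve u) =
     (2*ga / al, (3*be - 1 - u - ga^2) / al^2, 2*de / al^3,
      (u - 2*be*(1 + u) + 3*be^2 - 2*ga*de) / al^4, (be*(be - 1)*(be - u) - de^2) / al^6)"
  by (simp add: weier_transform_def legendre_curve_def algebra_simps power2_eq_square power3_eq_cube)

text \<open>The conditions for X = m x + b (with gamma = delta = 0 and m = alpha^2) to carry
  Y^2 = X(X-1)(X-u) to Y^2 = x(x-1)(x-v).\<close>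
definition legendre_match :: "'a::field \<Rightarrow> 'a \<Rightarrow> 'a \<Rightarrow> 'a \<Rightarrow> bool" where
  "legendre_match u v m b \<longleftrightarrow>
     3*b - 1 - u + (1 + v)*m = 0 \<and> u - 2*b*(1 + u) + 3*b^2 - v*m^2 = 0 \<and> b*(b - 1)*(b - u) = 0"

lemma legendre_transform_iff:
  fixes al be ga de u v :: "'a::field"
  assumes two: "(2::'a) \<noteq> 0" and al: "al \<noteq> 0"
  shows "weier_transform al be ga de (legendre_curve u) = legendre_curve v
           \<longleftrightarrow> ga = 0 \<and> de = 0 \<and> legendre_match u v (al^2) be"
proof -
  have "weier_transform al be ga de (legendre_curve u) = legendre_curve v \<longleftrightarrow>
          2*ga / al = 0 \<and> (3*be - 1 - u - ga^2) / al^2 = -(1 + v) \<and> 2*de / al^3 = 0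
          \<and> (u - 2*be*(1 + u) + 3*be^2 - 2*ga*de) / al^4 = v \<and> (be*(be - 1)*(be - u) - de^2) / al^6 = 0"
    unfolding weier_transform_legendre by (simp add: legendre_curve_def)
  also have "\<dots> \<longleftrightarrow> ga = 0 \<and> de = 0 \<and> legendre_match u v (al^2) be"
  proof -
    have "(al^2)^2 = al^4" by (simp flip: power_mult)
    then show ?thesis
      using two al by (auto simp: legendre_match_def field_simps)
  qed
  finally show ?thesis .
qed

lemma legendre_cubic_difference:
  fixes m b u v x :: "'a::field"
  shows "(m*x + b)*(m*x + b - 1)*(m*x + b - u) - m^3*(x*(x - 1)*(x - v)) =
           m^2*(3*b - 1 - u + (1 + v)*m)*x^2 + m*(u - 2*b*(1 + u) + 3*b^2 - v*m^2)*x
           + b*(b - 1)*(b - u)"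
  by (simp add: algebra_simps power2_eq_square power3_eq_cube)

lemma quadratic_three_roots:
  fixes c0 c1 c2 v :: "'a::field"
  assumes "v \<notin> {0, 1}" and "\<And>x. x \<in> {0, 1, v} \<Longrightarrow> c2*x^2 + c1*x + c0 = 0"
  shows "c2 = 0 \<and> c1 = 0 \<and> c0 = 0"
proof -
  have c0: "c0 = 0" using assms(2)[of 0] by simp
  have c1: "c1 = -c2" using assms(2)[of 1] c0 by (simp add: eq_neg_iff_add_eq_0 add.commute)
  have "v * (v - 1) * c2 = 0"
    using assms(2)[of v] c0 c1 by (simp add: algebra_simps power2_eq_square)
  then have "c2 = 0" using assms(1) by auto
  then show ?thesis using c0 c1 by simp
qed

lemma legendre_match_iff_image:
  fixes m b u v :: "'a::field"
  assumes m: "m \<noteq> 0" and v: "v \<notin> {0, 1}"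
  shows "legendre_match u v m b \<longleftrightarrow> (\<lambda>x. m*x + b) ` {0, 1, v} = {0, 1, u}"
proof
  assume "legendre_match u v m b"
  then have c2: "3*b - 1 - u + (1 + v)*m = 0" and c1: "u - 2*b*(1 + u) + 3*b^2 - v*m^2 = 0"
    and c0: "b*(b - 1)*(b - u) = 0"
    by (simp_all add: legendre_match_def)
  have cubic: "(m*x + b)*(m*x + b - 1)*(m*x + b - u) = m^3*(x*(x - 1)*(x - v))" for x
    using legendre_cubic_difference[of m x b u v] unfolding c2 c1 c0 by simp
  show "(\<lambda>x. m*x + b) ` {0, 1, v} = {0, 1, u}"
  proof (intro equalityI subsetI)
    fix y assume "y \<in> (\<lambda>x. m*x + b) ` {0, 1, v}"
    then obtain x where "x \<in> {0, 1, v}" "y = m*x + b" by blast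
    then have "y*(y - 1)*(y - u) = 0" using cubic[of x] by auto
    then show "y \<in> {0, 1, u}" by auto
  next
    fix y assume "y \<in> {0, 1, u}"
    define x where "x = (y - b) / m"
    have y: "y = m*x + b" using m by (simp add: x_def)
    then have "m^3*(x*(x - 1)*(x - v)) = 0" using cubic[of x] \<open>y \<in> {0, 1, u}\<close> by auto
    then have "x \<in> {0, 1, v}" using m by auto
    then show "y \<in> (\<lambda>x. m*x + b) ` {0, 1, v}" using y by blast
  qed
next
  assume image: "(\<lambda>x. m*x + b) ` {0, 1, v} = {0, 1, u}"
  have "m^2*(3*b - 1 - u + (1 + v)*m)*x^2 + m*(u - 2*b*(1 + u) + 3*b^2 - v*m^2)*x
          + b*(b - 1)*(b - u) = 0" if "x \<in> {0, 1, v}" for x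
  proof -
    have "m*x + b \<in> {0, 1, u}" using image that by blast
    then show ?thesis
      using legendre_cubic_difference[of m x b u v] that by auto
  qed
  then have "m^2*(3*b - 1 - u + (1 + v)*m) = 0 \<and> m*(u - 2*b*(1 + u) + 3*b^2 - v*m^2) = 0
               \<and> b*(b - 1)*(b - u) = 0"
    by (rule quadratic_three_roots[OF v])
  then show "legendre_match u v m b"
    using m by (simp add: legendre_match_def)
qed

definition square_affine_equiv :: "'a::field set \<Rightarrow> 'a set \<Rightarrow> bool" where
  "square_affine_equiv A B \<longleftrightarrow> (\<exists>m b. m \<noteq> 0 \<and> is_square m \<and> (\<lambda>x. m*x + b) ` A = B)"

lemma legendre_iso_iff_affine:
  fixes u v :: "'a::field"
  assumes two: "(2::'a) \<noteq> 0" and v: "v \<notin> {0, 1}"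
  shows "weier_iso (legendre_curve u) (legendre_curve v) \<longleftrightarrow> square_affine_equiv {0, 1, v} {0, 1, u}"
proof -
  have "weier_iso (legendre_curve u) (legendre_curve v)
          \<longleftrightarrow> (\<exists>al b. al \<noteq> 0 \<and> legendre_match u v (al^2) b)"
    unfolding weier_iso_def using legendre_transform_iff[OF two] by blast
  also have "\<dots> \<longleftrightarrow> (\<exists>m b. m \<noteq> 0 \<and> is_square m \<and> legendre_match u v m b)"
  proof
    assume "\<exists>al b. al \<noteq> 0 \<and> legendre_match u v (al^2) b"
    then obtain al b where "al \<noteq> 0" "legendre_match u v (al^2) b" by blast
    then show "\<exists>m b. m \<noteq> 0 \<and> is_square m \<and> legendre_match u v m b"
      by (intro exI[of _ "al^2"] exI[of _ b]) auto
  next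
    assume "\<exists>m b. m \<noteq> 0 \<and> is_square m \<and> legendre_match u v m b"
    then obtain t b where "t^2 \<noteq> 0" "legendre_match u v (t^2) b" by (auto simp: is_square_def)
    then show "\<exists>al b. al \<noteq> 0 \<and> legendre_match u v (al^2) b" by auto
  qed
  also have "\<dots> \<longleftrightarrow> square_affine_equiv {0, 1, v} {0, 1, u}"
    unfolding square_affine_equiv_def using legendre_match_iff_image[OF _ v] by blast
  finally show ?thesis .
qed

section \<open>Isomorphism classes and the class-number sum\<close>

lemma square_affine_equiv_refl: "square_affine_equiv A A"
  unfolding square_affine_equiv_def by (rule exI[of _ 1], rule exI[of _ 0]) simp

lemma square_affine_equiv_sym:
  assumes "square_affine_equiv A B"
  shows "square_affine_equiv B A"
proof -
  obtain m b where m: "m \<noteq> 0" "is_square m" and AB: "(\<lambda>x. m*x + b) ` A = B"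
    using assms unfolding square_affine_equiv_def by blast
  have "(\<lambda>y. (1/m)*y - b/m) ` B = (\<lambda>x. (1/m)*(m*x + b) - b/m) ` A"
    unfolding AB[symmetric] image_image ..
  also have "\<dots> = A" using m by (simp add: field_simps)
  finally show ?thesis
    unfolding square_affine_equiv_def using m is_square_inverse_iff[of m]
    by (intro exI[of _ "1/m"] exI[of _ "-b/m"]) simp
qed

lemma square_affine_equiv_trans:
  assumes "square_affine_equiv A B" "square_affine_equiv B C"
  shows "square_affine_equiv A C"
proof -
  obtain m b where m: "m \<noteq> 0" "is_square m" and AB: "(\<lambda>x. m*x + b) ` A = B"
    using assms(1) unfolding square_affine_equiv_def by blast
  obtain m' b' where m': "m' \<noteq> 0" "is_square m'" and BC: "(\<lambda>x. m'*x + b') ` B = C"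
    using assms(2) unfolding square_affine_equiv_def by blast
  have "(\<lambda>x. (m'*m)*x + (m'*b + b')) ` A = C"
    unfolding BC[symmetric] AB[symmetric] image_image by (simp add: algebra_simps)
  then show ?thesis
    unfolding square_affine_equiv_def using m m' is_square_mult[of m' m]
    by (intro exI[of _ "m'*m"] exI[of _ "m'*b + b'"]) simp
qed

lemma legendre_iso_rel_affine:
  assumes two: "(2::'a::field) \<noteq> 0"
  shows "(legendre_iso_rel :: ('a \<times> 'a) set) =
           {(u, v). u \<notin> {0, 1} \<and> v \<notin> {0, 1} \<and> square_affine_equiv {0, 1, v} {0, 1, u}}"
  unfolding legendre_iso_rel_def using legendre_iso_iff_affine[OF two] by blast

lemma equiv_legendre_iso_rel:
  assumes two: "(2::'a::field) \<noteq> 0"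
  shows "equiv (UNIV - {0, 1}) (legendre_iso_rel :: ('a \<times> 'a) set)"
  unfolding legendre_iso_rel_affine[OF two]
proof (rule equivI)
  show "refl_on (UNIV - {0, 1::'a})
          {(u, v). u \<notin> {0, 1} \<and> v \<notin> {0, 1} \<and> square_affine_equiv {0, 1, v} {0, 1, u}}"
    by (auto intro!: refl_onI square_affine_equiv_refl)
  show "sym {(u, v::'a). u \<notin> {0, 1} \<and> v \<notin> {0, 1} \<and> square_affine_equiv {0, 1, v} {0, 1, u}}"
    by (auto intro!: symI square_affine_equiv_sym)
  show "trans {(u, v::'a). u \<notin> {0, 1} \<and> v \<notin> {0, 1} \<and> square_affine_equiv {0, 1, v} {0, 1, u}}"
    by (auto intro!: transI elim: square_affine_equiv_trans[rotated])
qed (auto)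

text \<open>The six affine maps permuting {0, 1, u} onto some {0, 1, v}: each entry is the slope m
  together with the resulting parameter v (the classical orbit of the lambda-invariant).\<close>
definition legendre_moves :: "'a::field \<Rightarrow> ('a \<times> 'a) list" where
  "legendre_moves u = [(1, u), (-1, 1 - u), (u, 1/u), (-u, (u - 1)/u), (u - 1, 1/(1 - u)), (1 - u, u/(u - 1))]"

definition legendre_class :: "'a::field \<Rightarrow> 'a set" where
  "legendre_class u = {v. \<exists>m. (m, v) \<in> set (legendre_moves u) \<and> is_square m}"

lemma affine_triple_cases:
  fixes u v m b :: "'a::field"
  assumes u: "u \<notin> {0, 1}" and v: "v \<notin> {0, 1}" and m: "m \<noteq> 0"
    and image: "(\<lambda>x. m*x + b) ` {0, 1, v} = {0, 1, u}"
  shows "(m, v) \<in> set (legendre_moves u)"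
proof -
  have b: "b \<in> {0, 1, u}" and mb: "m + b \<in> {0, 1, u}" and mvb: "m*v + b \<in> {0, 1, u}"
    using image by auto
  have distinct: "b \<noteq> m + b" "b \<noteq> m*v + b" "m + b \<noteq> m*v + b" using m v by auto
  have "(m = 1 \<and> v = u) \<or> (m = -1 \<and> v = 1 - u) \<or> (m = u \<and> v = 1/u) \<or> (m = -u \<and> v = (u - 1)/u)
        \<or> (m = u - 1 \<and> v = 1/(1 - u)) \<or> (m = 1 - u \<and> v = u/(u - 1))"
    using b
  proof (elim insertE emptyE)
    assume b0: "b = 0"
    then consider "m = 1" | "m = u" using mb m by auto
    then show ?thesis
    proof cases
      case 1 then show ?thesis using mvb b0 v by auto
    next
      case 2 then have "u*v = 1" using mvb b0 distinct u by auto
      then show ?thesis using 2 u by (auto simp: field_simps)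
    qed
  next
    assume b1: "b = 1"
    then consider "m = -1" | "m = u - 1" using mb m by (auto simp: algebra_simps add_eq_0_iff)
    then show ?thesis
    proof cases
      case 1 then have "-v + 1 = u" using mvb b1 distinct by auto
      then show ?thesis using 1 by (auto simp: algebra_simps)
    next
      case 2 then have "(u - 1)*v + 1 = 0" using mvb b1 distinct by auto
      then show ?thesis using 2 u by (auto simp: field_simps)
    qed
  next
    assume bu: "b = u"
    then consider "m = -u" | "m = 1 - u" using mb m by (auto simp: algebra_simps add_eq_0_iff)
    then show ?thesis
    proof cases
      case 1 then have "-u*v + u = 1" using mvb bu distinct by auto
      then show ?thesis using 1 u by (auto simp: field_simps)
    next
      case 2 then have "(1 - u)*v + u = 0" using mvb bu distinct by auto
      then show ?thesis using 2 u by (auto simp: field_simps)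
    qed
  qed
  then show ?thesis by (auto simp: legendre_moves_def)
qed

lemma legendre_moves_affine:
  fixes u :: "'a::field"
  assumes u: "u \<notin> {0, 1}" and move: "(m, v) \<in> set (legendre_moves u)"
  shows "m \<noteq> 0" "v \<notin> {0, 1}" "\<exists>b. (\<lambda>x. m*x + b) ` {0, 1, v} = {0, 1, u}"
proof -
  have u1: "1 - u \<noteq> 0" "u - 1 \<noteq> 0" using u by auto
  show "m \<noteq> 0" "v \<notin> {0, 1}" using move u u1 by (auto simp: legendre_moves_def field_simps)
  show "\<exists>b. (\<lambda>x. m*x + b) ` {0, 1, v} = {0, 1, u}"
    using move unfolding legendre_moves_def
  proof (simp only: set_simps insert_iff empty_iff prod.inject simp_thms, elim disjE conjE)
    assume "m = 1" "v = u"
    then show ?thesis by (intro exI[of _ 0]) auto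
  next
    assume "m = -1" "v = 1 - u"
    then show ?thesis by (intro exI[of _ 1]) auto
  next
    assume "m = u" "v = 1/u"
    then show ?thesis using u by (intro exI[of _ 0]) auto
  next
    assume "m = -u" "v = (u - 1)/u"
    then show ?thesis using u by (intro exI[of _ u]) (auto simp: field_simps)
  next
    assume "m = u - 1" "v = 1/(1 - u)"
    then show ?thesis using u1 by (intro exI[of _ 1]) (auto simp: field_simps)
  next
    assume m: "m = 1 - u" and v: "v = u/(u - 1)"
    have "m*v + u = 0" using u1 unfolding m v by (simp add: field_simps)
    then show ?thesis using m by (intro exI[of _ u]) auto
  qed
qed

lemma legendre_iso_class:
  fixes u :: "'a::field"
  assumes two: "(2::'a) \<noteq> 0" and u: "u \<notin> {0, 1}"
  shows "legendre_iso_rel `` {u} = legendre_class u"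
proof (intro equalityI subsetI)
  fix v assume "v \<in> legendre_iso_rel `` {u}"
  then obtain m b where v: "v \<notin> {0, 1}" and m: "m \<noteq> 0" "is_square m"
    and image: "(\<lambda>x. m*x + b) ` {0, 1, v} = {0, 1, u}"
    unfolding legendre_iso_rel_affine[OF two] square_affine_equiv_def by blast
  then show "v \<in> legendre_class u"
    using affine_triple_cases[OF u v m(1) image] unfolding legendre_class_def by blast
next
  fix v assume "v \<in> legendre_class u"
  then obtain m where move: "(m, v) \<in> set (legendre_moves u)" and "is_square m"
    unfolding legendre_class_def by blast
  then have "square_affine_equiv {0, 1, v} {0, 1, u}"
    using legendre_moves_affine[OF u move] unfolding square_affine_equiv_def by blast
  then show "v \<in> legendre_iso_rel `` {u}"
    using u legendre_moves_affine(2)[OF u move] unfolding legendre_iso_rel_affine[OF two] by blast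
qed

lemma card_quotient_sum:
  assumes fin: "finite A" and eq: "equiv A r"
  shows "real (card (A // r)) = (\<Sum>x\<in>A. 1 / real (card (r``{x})))"
proof -
  have fin_classes: "finite X" if "X \<in> A // r" for X
    using that fin Union_quotient[OF eq] by (metis Union_upper finite_subset)
  have "(\<Sum>x\<in>A. 1 / real (card (r``{x}))) = (\<Sum>x\<in>\<Union>(A // r). 1 / real (card (r``{x})))"
    using Union_quotient[OF eq] by simp
  also have "\<dots> = (\<Sum>X\<in>A // r. \<Sum>x\<in>X. 1 / real (card (r``{x})))"
    using sum.Union_disjoint[of "A // r" "\<lambda>x. 1 / real (card (r``{x}))"] fin_classes
      quotient_disj[OF eq] finite_quotient[OF fin equiv_type[OF eq]]
    by (auto simp: o_def)
  also have "\<dots> = (\<Sum>X\<in>A // r. 1)"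
  proof (rule sum.cong[OF refl])
    fix X assume X: "X \<in> A // r"
    then obtain a where a: "a \<in> A" "X = r``{a}" by (auto elim: quotientE)
    have "r``{x} = X" if "x \<in> X" for x
    proof -
      have "(a, x) \<in> r" using a that by simp
      then show ?thesis using equiv_class_eq[OF eq] a by simp
    qed
    then have "(\<Sum>x\<in>X. 1 / real (card (r``{x}))) = (\<Sum>x\<in>X. 1 / real (card X))"
      by (intro sum.cong) auto
    moreover have "X \<noteq> {}" using a equiv_class_self[OF eq a(1)] by auto
    ultimately show "(\<Sum>x\<in>X. 1 / real (card (r``{x}))) = 1"
      using fin_classes[OF X] by simp
  qed
  finally show ?thesis by simp
qed

lemma I_L_as_sum:
  assumes two: "(2::'a::{finite,field}) \<noteq> 0"
  shows "real (I_L TYPE('a)) = (\<Sum>u\<in>UNIV - {0, 1::'a}. 1 / real (card (legendre_class u)))"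
proof -
  have "real (I_L TYPE('a)) = (\<Sum>u\<in>UNIV - {0, 1::'a}. 1 / real (card (legendre_iso_rel``{u})))"
    unfolding I_L_def by (rule card_quotient_sum[OF _ equiv_legendre_iso_rel[OF two]]) simp
  also have "\<dots> = (\<Sum>u\<in>UNIV - {0, 1::'a}. 1 / real (card (legendre_class u)))"
    by (rule sum.cong) (auto simp: legendre_iso_class[OF two])
  finally show ?thesis .
qed

section \<open>Generic class sizes and their sums\<close>

text \<open>Number of admissible moves; it is the class size whenever the six values are distinct.\<close>
definition class_weight :: "'a::field \<Rightarrow> nat" where
  "class_weight u = length (filter (\<lambda>p. is_square (fst p)) (legendre_moves u))"

lemma distinct_legendre_values:
  fixes u :: "'a::field"
  assumes two: "(2::'a) \<noteq> 0" and u: "u \<notin> {0, 1, -1, 2, 1/2}" and nonroot: "u^2 - u + 1 \<noteq> 0"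
  shows "distinct (map snd (legendre_moves u))"
proof -
  have "u \<noteq> 0" "u \<noteq> 1" "u \<noteq> -1" "u \<noteq> 2" "2*u \<noteq> 1" using u two by (auto simp: field_simps)
  moreover have "u*u \<noteq> 1" using \<open>u \<noteq> 1\<close> \<open>u \<noteq> -1\<close> power2_eq_1_iff[of u] by (simp add: power2_eq_square)
  moreover have "u*u - u + 1 \<noteq> 0" using nonroot by (simp add: power2_eq_square)
  ultimately show ?thesis
    by (auto simp: legendre_moves_def field_simps)
qed

lemma card_legendre_class_generic:
  fixes u :: "'a::field"
  assumes "distinct (map snd (legendre_moves u))"
  shows "card (legendre_class u) = class_weight u"
proof -
  let ?moves = "filter (\<lambda>p. is_square (fst p)) (legendre_moves u)"
  have "legendre_class u = set (map snd ?moves)"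
    by (force simp: legendre_class_def)
  moreover have "distinct (map snd ?moves)"
    using assms by (simp add: distinct_map_filter)
  ultimately have "card (legendre_class u) = length (map snd ?moves)"
    by (simp only: distinct_card)
  then show ?thesis unfolding class_weight_def by simp
qed

text \<open>If -1 is not a square, exactly one slope of each pair m, -m is a square.\<close>
lemma class_weight_nonsquare:
  fixes u :: "'a::{finite,field}"
  assumes two: "(2::'a) \<noteq> 0" and not_sq: "\<not> is_square (-1::'a)" and u: "u \<notin> {0, 1}"
  shows "class_weight u = 3"
proof -
  have "is_square u \<longleftrightarrow> \<not> is_square (-u)"
    using square_or_neg_square[OF two not_sq, of u] not_square_neg[OF not_sq, of u] u by auto
  moreover have "is_square (u - 1) \<longleftrightarrow> \<not> is_square (1 - u)"
    using square_or_neg_square[OF two not_sq, of "u - 1"] not_square_neg[OF not_sq, of "u - 1"] u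
    by auto
  ultimately show ?thesis
    using not_sq by (simp add: class_weight_def legendre_moves_def)
qed

lemma class_weight_square:
  fixes u :: "'a::field"
  assumes sq: "is_square (-1::'a)"
  shows "class_weight u = 2 + (if is_square u then 2 else 0) + (if is_square (u - 1) then 2 else 0)"
proof -
  have "is_square (1 - u) \<longleftrightarrow> is_square (u - 1)"
    using is_square_neg_iff[OF sq, of "u - 1"] by simp
  then show ?thesis
    using sq is_square_neg_iff[OF sq, of u] by (simp add: class_weight_def legendre_moves_def)
qed

lemma card_parameter_set:
  "real (card (UNIV - {0, 1::'a::{finite,field}})) = real (card (UNIV::'a set)) - 2"
proof -
  have "card (UNIV - {0, 1::'a}) = card (UNIV::'a set) - 2" by (subst card_Diff_subset) auto
  moreover have "card {0, 1::'a} \<le> card (UNIV::'a set)" by (rule card_mono) auto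
  ultimately show ?thesis by (simp add: of_nat_diff)
qed

lemma sum_weight_nonsquare:
  assumes two: "(2::'a::{finite,field}) \<noteq> 0" and not_sq: "\<not> is_square (-1::'a)"
  shows "(\<Sum>u\<in>UNIV - {0, 1::'a}. 1 / real (class_weight u)) = (real (card (UNIV::'a set)) - 2) / 3"
proof -
  have "(\<Sum>u\<in>UNIV - {0, 1::'a}. 1 / real (class_weight u)) = real (card (UNIV - {0, 1::'a})) / 3"
    using class_weight_nonsquare[OF two not_sq] by simp
  also have "\<dots> = (real (card (UNIV::'a set)) - 2) / 3" by (simp only: card_parameter_set)
  finally show ?thesis .
qed

lemma card_square_params:
  "card {u \<in> UNIV - {0, 1::'a::{finite,field}}. is_square u} + 1 = card (nonzero_squares::'a set)"
proof -
  have "{u \<in> UNIV - {0, 1::'a}. is_square u} = nonzero_squares - {1}"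
    by (auto simp: nonzero_squares_def)
  moreover have "(1::'a) \<in> nonzero_squares" by (simp add: nonzero_squares_def)
  ultimately show ?thesis
    using card_Suc_Diff1[of "nonzero_squares::'a set" 1] by simp
qed

text \<open>When -1 is a square, u \<mapsto> 1 - u matches the u with u - 1 square to those with u square.\<close>
lemma card_shifted_square_params:
  assumes sq: "is_square (-1::'a::{finite,field})"
  shows "card {u \<in> UNIV - {0, 1::'a}. is_square (u - 1)} = card {u \<in> UNIV - {0, 1::'a}. is_square u}"
proof (rule bij_betw_same_card)
  have flip: "is_square (1 - u) \<longleftrightarrow> is_square (u - 1)" for u :: 'a
    using is_square_neg_iff[OF sq, of "u - 1"] by simp
  show "bij_betw (\<lambda>u. 1 - u) {u \<in> UNIV - {0, 1::'a}. is_square (u - 1)} {u \<in> UNIV - {0, 1}. is_square u}"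
    by (rule bij_betw_byWitness[where f' = "\<lambda>u. 1 - u"])
      (auto simp: flip, simp add: is_square_neg_iff[OF sq])
qed

lemma sum_weight_square:
  assumes two: "(2::'a::{finite,field}) \<noteq> 0" and sq: "is_square (-1::'a)"
  shows "(\<Sum>u\<in>UNIV - {0, 1::'a}. 1 / real (class_weight u)) = (7 * real (card (UNIV::'a set)) - 11) / 24"
proof -
  let ?S = "UNIV - {0, 1::'a}"
  let ?q = "card (UNIV::'a set)"
  define a where "a = card {u \<in> ?S. is_square u}"
  define c where "c = card {u \<in> ?S. is_square u \<and> is_square (u - 1)}"
  have count: "(\<Sum>u\<in>?S. if P u then x else 0) = x * real (card {u \<in> ?S. P u})"
    for P and x :: real
    by (simp add: sum.inter_filter[symmetric])
  have weight: "1 / real (class_weight u) = 1/2 - (if is_square u then 1/4 else 0)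
      - (if is_square (u - 1) then 1/4 else 0) + (if is_square u \<and> is_square (u - 1) then 1/6 else 0)"
    for u :: 'a
    unfolding class_weight_square[OF sq] by (cases "is_square u"; cases "is_square (u - 1)") simp_all
  have "(\<Sum>u\<in>?S. 1 / real (class_weight u)) = real (card ?S) / 2 - real a / 4 - real a / 4 + real c / 6"
    unfolding weight sum.distrib sum_subtractf count card_shifted_square_params[OF sq] a_def c_def
    by simp
  moreover have "real ?q = 2 * real a + 3"
    using card_nonzero_squares[OF two] card_square_params[where 'a='a] unfolding a_def by simp
  moreover have "4 * real c + 5 = real ?q"
  proof -
    have "4 * card {u::'a. u \<noteq> 0 \<and> u \<noteq> 1 \<and> is_square u \<and> is_square (u - 1)} + 5 = ?q"
      using card_consecutive_squares[OF two] sq by simp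
    moreover have "{u \<in> ?S. is_square u \<and> is_square (u - 1)} = {u::'a. u \<noteq> 0 \<and> u \<noteq> 1 \<and> is_square u \<and> is_square (u - 1)}"
      by auto
    ultimately have "4 * c + 5 = ?q" unfolding c_def by simp
    then show ?thesis by (metis of_nat_add of_nat_mult of_nat_numeral)
  qed
  moreover have "real (card ?S) = real ?q - 2"
    by (rule card_parameter_set)
  ultimately show ?thesis by (simp add: field_simps)
qed

section \<open>Exceptional parameters\<close>

definition class_defect :: "'a::field \<Rightarrow> real" where
  "class_defect u = 1 / real (card (legendre_class u)) - 1 / real (class_weight u)"

lemma I_L_decomposition:
  fixes E :: "'a::{finite,field} set"
  assumes two: "(2::'a) \<noteq> 0" and E: "E \<subseteq> UNIV - {0, 1}"
    and generic: "\<And>u. u \<in> (UNIV - {0, 1}) - E \<Longrightarrow> distinct (map snd (legendre_moves u))"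
  shows "real (I_L TYPE('a)) =
           (\<Sum>u\<in>UNIV - {0, 1::'a}. 1 / real (class_weight u)) + (\<Sum>u\<in>E. class_defect u)"
proof -
  have "(\<Sum>u\<in>UNIV - {0, 1::'a}. class_defect u) = (\<Sum>u\<in>E. class_defect u)"
    by (rule sum.mono_neutral_right)
      (use E generic card_legendre_class_generic in \<open>auto simp: class_defect_def\<close>)
  then show ?thesis
    unfolding I_L_as_sum[OF two] class_defect_def by (simp add: sum_subtractf)
qed

text \<open>At a root of u^2 - u + 1 (a primitive sixth root of unity) the six values collapse to
  {u, 1 - u}, while all six slopes are squares as soon as -1 is.\<close>
lemma sixth_root_class:
  fixes u :: "'a::field"
  assumes root: "u^2 - u + 1 = 0"
  shows "legendre_class u = (if is_square (-1::'a) then {u, 1 - u} else {u})"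
    "class_weight u = (if is_square (-1::'a) then 6 else 3)"
proof -
  have u: "u \<noteq> 0" "u \<noteq> 1" "1 - u \<noteq> 0" "u - 1 \<noteq> 0" using root by auto
  have uu: "u * u = u - 1" using root by (simp add: power2_eq_square algebra_simps)
  have moves: "legendre_moves u = [(1, u), (-1, 1 - u), (u, 1 - u), (-u, u), (u - 1, u), (1 - u, 1 - u)]"
    using u uu by (simp add: legendre_moves_def field_simps)
  have "-u = (u - 1)^2" using uu by (simp add: power2_eq_square algebra_simps)
  then have neg_u: "is_square (-u)" by simp
  have u_1: "is_square (u - 1)" using uu by (metis is_square_power2 power2_eq_square)
  have sq_u: "is_square u \<longleftrightarrow> is_square (-1::'a)"
    using not_square_neg[of u] is_square_neg_iff[of "-u"] neg_u u by auto
  have "is_square (1 - u) \<longleftrightarrow> is_square u"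
  proof -
    have "1 / u = 1 - u" using u uu by (simp add: field_simps)
    then show ?thesis using is_square_inverse_iff[of u] by simp
  qed
  then have sq_1u: "is_square (1 - u) \<longleftrightarrow> is_square (-1::'a)" using sq_u by simp
  show "legendre_class u = (if is_square (-1::'a) then {u, 1 - u} else {u})"
    unfolding legendre_class_def moves using neg_u u_1 sq_u sq_1u by auto
  show "class_weight u = (if is_square (-1::'a) then 6 else 3)"
    unfolding class_weight_def moves using neg_u u_1 sq_u sq_1u by auto
qed

lemma sixth_root_conjugate:
  fixes u :: "'a::field"
  assumes three: "(3::'a) \<noteq> 0" and root: "u^2 - u + 1 = 0"
  shows "u \<noteq> 1 - u"
proof
  assume "u = 1 - u"
  then have "2*u = 1" by (simp add: algebra_simps mult_2)
  moreover have "4*(u^2 - u + 1) = (2*u)^2 - 2*(2*u) + 4" by (simp add: algebra_simps power2_eq_square)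
  ultimately show False using root three by simp
qed

lemma sixth_root_defect:
  fixes u :: "'a::field"
  assumes three: "(3::'a) \<noteq> 0" and root: "u^2 - u + 1 = 0"
  shows "class_defect u = (if is_square (-1::'a) then 1/3 else 2/3)"
  unfolding class_defect_def sixth_root_class[OF root] using sixth_root_conjugate[OF three root] by simp

lemma sixth_roots:
  assumes three: "(3::'a::field) \<noteq> 0"
  shows "card {u::'a. u^2 - u + 1 = 0} \<in> {0, 2}"
proof (cases "\<exists>w::'a. w^2 - w + 1 = 0")
  case True
  then obtain w :: 'a where w: "w^2 - w + 1 = 0" by blast
  have "x^2 - x + 1 = (x - w)*(x - (1 - w)) + (w^2 - w + 1)" for x :: 'a
    by (simp add: algebra_simps power2_eq_square)
  then have "{u::'a. u^2 - u + 1 = 0} = {w, 1 - w}" using w by auto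
  moreover have "w \<noteq> 1 - w" by (rule sixth_root_conjugate[OF three w])
  ultimately show ?thesis by simp
qed simp

text \<open>The harmonic parameters -1, 2, 1/2 (j = 1728) form one orbit of the six moves.\<close>
lemma harmonic_moves:
  assumes two: "(2::'a::field) \<noteq> 0"
  shows "legendre_moves (-1::'a) = [(1, -1), (-1, 2), (-1, -1), (1, 2), (-2, 1/2), (2, 1/2)]"
    "legendre_moves (2::'a) = [(1, 2), (-1, -1), (2, 1/2), (-2, 1/2), (1, -1), (-1, 2)]"
    "legendre_moves (1/2::'a) = [(1, 1/2), (-1, 1/2), (1/2, 2), (-1/2, -1), (-1/2, 2), (1/2, -1)]"
  using two by (simp_all add: legendre_moves_def field_simps)

lemma harmonic_distinct:
  assumes two: "(2::'a::field) \<noteq> 0" and three: "(3::'a) \<noteq> 0"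
  shows "(-1::'a) \<noteq> 2" "(2::'a) \<noteq> 1/2" "(-1::'a) \<noteq> 1/2"
proof -
  have half: "2 * (1/2::'a) = 1" using two by simp
  show "(-1::'a) \<noteq> 2"
  proof
    assume h: "(-1::'a) = 2"
    have "(3::'a) = 2 + 1" by simp
    also have "\<dots> = 0" unfolding h[symmetric] by simp
    finally show False using three by simp
  qed
  show "(2::'a) \<noteq> 1/2"
  proof
    assume h: "(2::'a) = 1/2"
    have "(3::'a) = 2 * 2 - 1" by simp
    also have "\<dots> = 0" using half unfolding h[symmetric] by simp
    finally show False using three by simp
  qed
  show "(-1::'a) \<noteq> 1/2"
  proof
    assume h: "(-1::'a) = 1/2"
    have "(3::'a) = 1 - 2 * (-1)" by simp
    also have "\<dots> = 0" using half unfolding h by simp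
    finally show False using three by simp
  qed
qed

lemma harmonic_class:
  assumes two: "(2::'a::field) \<noteq> 0"
  defines "P \<equiv> is_square (2::'a) \<or> is_square (-2::'a)"
  shows "legendre_class (-1::'a) = {-1, 2} \<union> (if P then {1/2} else {})"
    "legendre_class (2::'a) = {-1, 2} \<union> (if P then {1/2} else {})"
    "legendre_class (1/2::'a) = {1/2} \<union> (if P then {-1, 2} else {})"
proof -
  have half: "is_square (1/2::'a) \<longleftrightarrow> is_square (2::'a)" "is_square (-1/2::'a) \<longleftrightarrow> is_square (-2::'a)"
    using is_square_inverse_iff[of "2::'a"] is_square_inverse_iff[of "-2::'a"] by simp_all
  have by_moves: "legendre_class u = {v. \<exists>(m, w)\<in>set (legendre_moves u). w = v \<and> is_square m}" for u :: 'a
    unfolding legendre_class_def by auto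
  show "legendre_class (-1::'a) = {-1, 2} \<union> (if P then {1/2} else {})"
    unfolding by_moves harmonic_moves[OF two] P_def by auto
  show "legendre_class (2::'a) = {-1, 2} \<union> (if P then {1/2} else {})"
    unfolding by_moves harmonic_moves[OF two] P_def by auto
  show "legendre_class (1/2::'a) = {1/2} \<union> (if P then {-1, 2} else {})"
    unfolding by_moves harmonic_moves[OF two] P_def using half by auto
qed

lemma harmonic_params:
  assumes two: "(2::'a::field) \<noteq> 0"
  shows "{-1, 2, 1/2} \<subseteq> UNIV - {0, 1::'a}"
proof -
  have "(-1::'a) \<noteq> 1" by (rule neg_neq_self[OF two]) simp
  moreover have "(2::'a) \<noteq> 1"
  proof
    assume "(2::'a) = 1"
    then have "(1::'a) = 0" by (metis add_cancel_right_right one_add_one)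
    then show False by simp
  qed
  moreover then have "(1/2::'a) \<noteq> 1" using two by (simp add: field_simps)
  ultimately show ?thesis using two by auto
qed

text \<open>Harmonic weights when -1 is a square (then -2 and 2 are squares together).\<close>
lemma harmonic_weight:
  assumes two: "(2::'a::field) \<noteq> 0" and sq: "is_square (-1::'a)"
  shows "class_weight (-1::'a) = (if is_square (2::'a) then 6 else 4)"
    "class_weight (2::'a) = (if is_square (2::'a) then 6 else 4)"
    "class_weight (1/2::'a) = (if is_square (2::'a) then 6 else 2)"
proof -
  have signs: "is_square (-2::'a) \<longleftrightarrow> is_square (2::'a)" "is_square (-1/2::'a) \<longleftrightarrow> is_square (2::'a)"
    "is_square (1/2::'a) \<longleftrightarrow> is_square (2::'a)"
    using is_square_neg_iff[OF sq, of 2] is_square_inverse_iff[of "-2::'a"] is_square_inverse_iff[of "2::'a"]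
    by simp_all
  show "class_weight (-1::'a) = (if is_square (2::'a) then 6 else 4)"
    "class_weight (2::'a) = (if is_square (2::'a) then 6 else 4)"
    "class_weight (1/2::'a) = (if is_square (2::'a) then 6 else 2)"
    unfolding class_weight_def harmonic_moves[OF two] using sq signs by simp_all
qed

lemma harmonic_defect_sum:
  assumes two: "(2::'a::{finite,field}) \<noteq> 0" and three: "(3::'a) \<noteq> 0"
  shows "(\<Sum>u\<in>{-1, 2, 1/2::'a}. class_defect u) =
           (if \<not> is_square (-1::'a) then 0 else if is_square (2::'a) then 1/2 else 1)"
proof -
  note distinct = harmonic_distinct[OF two three]
  have three_terms: "(\<Sum>u\<in>{-1, 2, 1/2::'a}. class_defect u) = class_defect (-1::'a) + class_defect (2::'a) + class_defect (1/2::'a)"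
    using distinct by (simp add: add.assoc)
  have card3: "card {1/2, -1, 2::'a} = 3" "card {-1, 2, 1/2::'a} = 3" and card2: "card {-1, 2::'a} = 2"
    using distinct two by (simp_all add: card_insert_if)
  show ?thesis
  proof (cases "is_square (-1::'a)")
    case False
    have "is_square (2::'a) \<or> is_square (-2::'a)" using square_or_neg_square[OF two False two] .
    moreover have "class_weight (-1::'a) = 3" "class_weight (2::'a) = 3" "class_weight (1/2::'a) = 3"
      using class_weight_nonsquare[OF two False] harmonic_params[OF two] by auto
    ultimately show ?thesis
      using False card3 unfolding three_terms unfolding class_defect_def harmonic_class[OF two] by simp
  next
    case True
    have "is_square (-2::'a) \<longleftrightarrow> is_square (2::'a)" using is_square_neg_iff[OF True, of 2] by simp
    then show ?thesis
      using True card3 card2 distinct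
      unfolding three_terms unfolding class_defect_def harmonic_class[OF two] harmonic_weight[OF two True] by simp
  qed
qed

section \<open>The counting identities\<close>

lemma harmonic_not_sixth_root:
  fixes u :: "'a::field"
  assumes two: "(2::'a) \<noteq> 0" and three: "(3::'a) \<noteq> 0" and u: "u \<in> {-1, 2, 1/2}"
  shows "u^2 - u + 1 \<noteq> 0"
proof
  assume root: "u^2 - u + 1 = 0"
  from u consider "u = -1" | "u = 2" | "u = 1/2" by blast
  then show False
  proof cases
    case 1
    then have "u^2 - u + 1 = 3" by (simp add: power2_eq_square)
    then show False using root three by simp
  next
    case 2
    then have "u^2 - u + 1 = 3" by (simp add: power2_eq_square)
    then show False using root three by simp
  next
    case 3
    then have "u = 1 - u" using two by (simp add: field_simps)
    then show False using sixth_root_conjugate[OF three root] by simp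
  qed
qed

lemma count_char_not_3:
  assumes two: "(2::'a::{finite,field}) \<noteq> 0" and three: "(3::'a) \<noteq> 0"
  defines "R \<equiv> {u::'a. u^2 - u + 1 = 0}"
  shows "real (I_L TYPE('a)) = (\<Sum>u\<in>UNIV - {0, 1::'a}. 1 / real (class_weight u))
           + (if \<not> is_square (-1::'a) then 0 else if is_square (2::'a) then 1/2 else 1)
           + real (card R) * (if is_square (-1::'a) then 1/3 else 2/3)"
proof -
  have R: "R \<subseteq> UNIV - {0, 1}" by (auto simp: R_def)
  have disjoint: "{-1, 2, 1/2} \<inter> R = {}"
    using harmonic_not_sixth_root[OF two three] unfolding R_def by blast
  have "real (I_L TYPE('a)) = (\<Sum>u\<in>UNIV - {0, 1::'a}. 1 / real (class_weight u))
          + (\<Sum>u\<in>{-1, 2, 1/2} \<union> R. class_defect u)"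
  proof (rule I_L_decomposition[OF two])
    show "{-1, 2, 1/2} \<union> R \<subseteq> UNIV - {0, 1}" using harmonic_params[OF two] R by blast
    fix u assume "u \<in> (UNIV - {0, 1}) - ({-1, 2, 1/2} \<union> R)"
    then show "distinct (map snd (legendre_moves u))"
      by (intro distinct_legendre_values[OF two]) (auto simp: R_def)
  qed
  also have "(\<Sum>u\<in>{-1, 2, 1/2} \<union> R. class_defect u)
               = (\<Sum>u\<in>{-1, 2, 1/2::'a}. class_defect u) + (\<Sum>u\<in>R. class_defect u)"
    by (rule sum.union_disjoint[OF _ _ disjoint]) simp_all
  also have "(\<Sum>u\<in>R. class_defect u) = real (card R) * (if is_square (-1::'a) then 1/3 else 2/3)"
    using sixth_root_defect[OF three] by (simp add: R_def)
  finally show ?thesis unfolding harmonic_defect_sum[OF two three] by simp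
qed

text \<open>In characteristic 3 the harmonic orbit and the sixth roots all collapse to u = -1.\<close>
lemma count_char_3:
  assumes two: "(2::'a::{finite,field}) \<noteq> 0" and three: "(3::'a) = 0"
  shows "real (I_L TYPE('a)) = (\<Sum>u\<in>UNIV - {0, 1::'a}. 1 / real (class_weight u))
           + (if is_square (-1::'a) then 5/6 else 2/3)"
proof -
  have two_eq: "(2::'a) = -1" using three by (simp add: eq_neg_iff_add_eq_0)
  have half_eq: "(1/2::'a) = -1" unfolding two_eq by simp
  have root_eq: "u^2 - u + 1 = (u + 1)^2" for u :: 'a
  proof -
    have "u^2 - u + 1 = (u + 1)^2 - 3*u" by (simp add: algebra_simps power2_eq_square)
    then show ?thesis using three by simp
  qed
  have "real (I_L TYPE('a)) = (\<Sum>u\<in>UNIV - {0, 1::'a}. 1 / real (class_weight u))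
          + (\<Sum>u\<in>{-1::'a}. class_defect u)"
  proof (rule I_L_decomposition[OF two])
    show "{-1} \<subseteq> UNIV - {0, 1::'a}" using harmonic_params[OF two] by blast
    fix u :: 'a assume "u \<in> (UNIV - {0, 1}) - {-1}"
    moreover then have "u^2 - u + 1 \<noteq> 0" unfolding root_eq by (simp add: eq_neg_iff_add_eq_0)
    ultimately show "distinct (map snd (legendre_moves u))"
      by (intro distinct_legendre_values[OF two]) (auto simp: two_eq half_eq)
  qed
  moreover have "class_defect (-1::'a) = (if is_square (-1::'a) then 5/6 else 2/3)"
  proof -
    have root: "(-1::'a)^2 - (-1) + 1 = 0" unfolding root_eq by simp
    have one_minus: "(1::'a) - (-1) = -1" using two_eq by (metis diff_minus_eq_add one_add_one)
    show ?thesis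
      unfolding class_defect_def sixth_root_class[OF root] one_minus by simp
  qed
  ultimately show ?thesis by simp
qed

lemma legendre_count_equations:
  assumes two: "(2::'a::{finite,field}) \<noteq> 0"
  defines "q \<equiv> card (UNIV::'a set)" and "N \<equiv> I_L TYPE('a)"
  shows "(q mod 4 = 3 \<and> (3*N + 2 = q \<or> 3*N = q \<or> 3*N = q + 2))
       \<or> (q mod 4 = 1 \<and> (\<exists>c\<in>{1, 9, 13, 17, 29}. 24*N = 7*q + c))"
proof (cases "is_square (-1::'a)")
  case False
  obtain r :: nat where r: "r \<in> {0, 2, 4}" and eq: "3 * real N + 2 = real q + real r"
  proof (cases "(3::'a) = 0")
    case True
    have "3 * real N + 2 = real q + real (2::nat)"
      using count_char_3[OF two True] sum_weight_nonsquare[OF two False] False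
      unfolding q_def N_def by (simp add: field_simps)
    then show ?thesis using that by simp
  next
    case three: False
    define R where "R = {u::'a. u^2 - u + 1 = 0}"
    have "3 * real N + 2 = real q + real (2 * card R)"
      using count_char_not_3[OF two three] sum_weight_nonsquare[OF two False] False
      unfolding q_def N_def R_def by (simp add: field_simps)
    moreover have "2 * card R \<in> {0, 2, 4}" using sixth_roots[OF three] unfolding R_def by auto
    ultimately show ?thesis using that by blast
  qed
  have "real (3 * N + 2) = real (q + r)" using eq by simp
  then have "3 * N + 2 = q + r" by (simp only: of_nat_eq_iff)
  moreover have "q mod 4 = 3" using card_mod_four[OF two] False unfolding q_def by simp
  ultimately show ?thesis using r by auto
next
  case True
  obtain c :: nat where c: "c \<in> {1, 9, 13, 17, 29}" and eq: "24 * real N = 7 * real q + real c"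
  proof (cases "(3::'a) = 0")
    case three: True
    have "24 * real N = 7 * real q + real (9::nat)"
      using count_char_3[OF two three] sum_weight_square[OF two True] True
      unfolding q_def N_def by (simp add: field_simps)
    then show ?thesis using that by simp
  next
    case three: False
    define R where "R = {u::'a. u^2 - u + 1 = 0}"
    have "24 * real N = 7 * real q + real ((if is_square (2::'a) then 1 else 13) + 8 * card R)"
      using count_char_not_3[OF two three] sum_weight_square[OF two True] True
      unfolding q_def N_def R_def by (cases "is_square (2::'a)") (simp_all add: field_simps)
    moreover have "(if is_square (2::'a) then 1 else 13) + 8 * card R \<in> {1, 9, 13, 17, 29}"
      using sixth_roots[OF three] unfolding R_def by auto
    ultimately show ?thesis using that by blast
  qed
  have "real (24 * N) = real (7 * q + c)" using eq by simp
  then have "24 * N = 7 * q + c" by (simp only: of_nat_eq_iff)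
  moreover have "q mod 4 = 1" using card_mod_four[OF two] True unfolding q_def by simp
  ultimately show ?thesis using c by auto
qed

section \<open>The closed formula\<close>

definition legendre_count_formula :: "nat \<Rightarrow> nat \<Rightarrow> bool" where
  "legendre_count_formula q N \<longleftrightarrow>
     (q mod 12 = 1 \<longrightarrow> N = (7*q + 29) div 24)
   \<and> (q mod 12 \<in> {3, 7} \<longrightarrow> N = (q + 2) div 3)
   \<and> (q mod 12 \<in> {5, 9} \<longrightarrow> N = (7*q + 13) div 24)
   \<and> (q mod 12 = 11 \<longrightarrow> N = (q - 2) div 3)"

lemma div_eq_of_bounds:
  fixes m d N :: nat
  assumes "d * N \<le> m" and "m < d * N + d"
  shows "m div d = N"
  using assms by (intro div_nat_eqI) simp_all

lemma mod_12_residues: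
  fixes q :: nat
  shows "q mod 4 = q mod 12 mod 4" "q mod 3 = q mod 12 mod 3"
  by (simp_all add: mod_mod_cancel)

text \<open>For q = 3 mod 4 the residue of q mod 3 is forced by which identity holds.\<close>
lemma count_formula_three_mod_four:
  fixes q N :: nat
  assumes q4: "q mod 4 = 3" and eq: "3*N + 2 = q \<or> 3*N = q \<or> 3*N = q + 2"
  shows "legendre_count_formula q N"
  unfolding legendre_count_formula_def
proof (intro conjI impI)
  assume "q mod 12 = 1" then show "N = (7*q + 29) div 24" using q4 mod_12_residues(1)[of q] by simp
next
  assume "q mod 12 \<in> {5, 9}" then show "N = (7*q + 13) div 24" using q4 mod_12_residues(1)[of q] by auto
next
  assume "q mod 12 \<in> {3, 7}"
  then have "q mod 3 \<noteq> 2" using mod_12_residues(2)[of q] by auto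
  then have "3*N = q \<or> 3*N = q + 2" using eq by presburger
  then show "N = (q + 2) div 3" by (intro div_eq_of_bounds[symmetric]) linarith+
next
  assume "q mod 12 = 11"
  then have "q mod 3 = 2" using mod_12_residues(2)[of q] by simp
  then have "3*N + 2 = q" using eq by presburger
  then show "N = (q - 2) div 3" by (intro div_eq_of_bounds[symmetric]) linarith+
qed

text \<open>For q = 1 mod 4, 24 N = 7 q + c forces q + c to be divisible by 3.\<close>
lemma count_formula_one_mod_four:
  fixes q N c :: nat
  assumes q4: "q mod 4 = 1" and eq: "24*N = 7*q + c" and c: "c \<in> {1, 9, 13, 17, 29}"
  shows "legendre_count_formula q N"
proof -
  have "q + c = 3 * (8*N - 2*q)" using eq by linarith
  then have residue: "(q mod 3 + c) mod 3 = 0" by (simp add: mod_add_left_eq)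
  show ?thesis
    unfolding legendre_count_formula_def
  proof (intro conjI impI)
    assume "q mod 12 = 1"
    then have "c \<in> {17, 29}" using residue c mod_12_residues(2)[of q] by (auto; presburger)
    then show "N = (7*q + 29) div 24" using eq by (intro div_eq_of_bounds[symmetric]) auto
  next
    assume "q mod 12 \<in> {3, 7}" then show "N = (q + 2) div 3" using q4 mod_12_residues(1)[of q] by auto
  next
    assume "q mod 12 \<in> {5, 9}"
    then have "c \<in> {1, 9, 13}" using residue c mod_12_residues(2)[of q] by (auto; presburger)
    then show "N = (7*q + 13) div 24" using eq by (intro div_eq_of_bounds[symmetric]) auto
  next
    assume "q mod 12 = 11" then show "N = (q - 2) div 3" using q4 mod_12_residues(1)[of q] by simp
  qed
qed

lemma two_nonzero_of_char:
  assumes "CHAR('a::field) \<ge> 3"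
  shows "(2::'a) \<noteq> 0"
proof
  assume "(2::'a) = 0"
  then have "of_nat 2 = (0::'a)" by simp
  then have "CHAR('a) dvd 2" by (simp only: of_nat_eq_0_iff_char_dvd)
  then show False using assms by (auto dest: dvd_imp_le)
qed

theorem mainTheorem5:
  fixes q :: nat
  assumes "q = card (UNIV :: ('a::{finite, field}) set)"
    and "CHAR('a) \<ge> 3"
  shows "(q mod 12 = 1 \<longrightarrow> I_L TYPE('a) = (7*q + 29) div 24)
       \<and> (q mod 12 \<in> {3, 7} \<longrightarrow> I_L TYPE('a) = (q + 2) div 3)
       \<and> (q mod 12 \<in> {5, 9} \<longrightarrow> I_L TYPE('a) = (7*q + 13) div 24)
       \<and> (q mod 12 = 11 \<longrightarrow> I_L TYPE('a) = (q - 2) div 3)"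
proof -
  have two: "(2::'a) \<noteq> 0" using two_nonzero_of_char[OF assms(2)] .
  have "legendre_count_formula q (I_L TYPE('a))"
    using legendre_count_equations[OF two] count_formula_three_mod_four count_formula_one_mod_four
    unfolding assms(1) by blast
  then show ?thesis unfolding legendre_count_formula_def .
qed

end
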